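(* Let $G$ be a graph with an RDV representation on a rooted tree $T$, with node coordinates $x(\cdot),y(\cdot)$ defined as in the context, and let $v_1,\dots,v_n$ be a bottom-up enumeration of the vertices of $G$. Then for all $1\le i<j\le n$, $v_iv_j$ is an edge of $G$ if and only if the vertical segment $q(v_j)$ intersects the horizontal segment $s(v_i)$.
   Context: An RDV representation of a graph $G$ consists of a rooted tree $T$ (the host tree; its vertices are called nodes) and, for every vertex $v$ of $G$, a downward path $P(v)$ in $T$ (a path that starts at some node and then always proceeds from a node to one of its children), such that for distinct vertices $v,w$, $vw$ is an edge of $G$ if and only if $P(v)$ and $P(w)$ share at least one node. For a vertex $v$, $t(v)$ denotes the node of $P(v)$ closest to the root, and $b(v)$ the node of $P(v)$ farthest from the root. A bottom-up enumeration is an ordering of the vertices of $G$ by non-increasing distance of $t(v)$ from the root (ties broken arbitrarily). Coordinates: fix an arbitrary order of the children at each node of $T$, and number the leaves $L_1,\dots,L_\ell$ from left to right according to this order (i.e., in the order they are encountered by a depth-first traversal respecting the child orders). For a node $u$, let $\ell(u)$ and $r(u)$ be the leftmost (lowest-indexed) and rightmost (highest-indexed) leaf descendant of $u$ (a leaf is its own descendant); let $x(u)$ be the index of $\ell(u)$ and, for a leaf $L_k$, $x(L_k)=k$; let $y(u)$ be the distance (number of edges) from $u$ to the root. Node $u$ is associated with the point $(x(u),y(u))\in\mathbb{R}^2$. For a vertex $v$, the horizontal segment $s(v)$ is the segment from $(x(t(v)),y(t(v)))$ to $(x(r(t(v))),y(t(v)))$, and the vertical segment $q(v)$ is the segment from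 $(x(b(v)),y(b(v)))$ to $(x(b(v)),y(t(v)))$. *)

theory Defs
  imports "HOL-Analysis.Analysis" "HOL-Library.Sublist"
begin

text \<open>A node is addressed by its position: the list of child indices on the way
  from the root. The root is [], the children of u are u @ [i].\<close>

datatype tree = Node "tree list"

inductive is_node :: "tree \<Rightarrow> nat list \<Rightarrow> bool" where
  root: "is_node (Node ts) []"
| child: "i < length ts \<Longrightarrow> is_node (ts ! i) p \<Longrightarrow> is_node (Node ts) (i # p)"

text \<open>Leaves: nodes without children (children of u are u@[0], u@[1], ...).\<close>
definition is_leaf :: "tree \<Rightarrow> nat list \<Rightarrow> bool" where
  "is_leaf T p \<longleftrightarrow> is_node T p \<and> \<not> is_node T (p @ [0])"

text \<open>Left-to-right (depth-first, respecting child orders) order on nodes: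
  lexicographic order on positions; leaves are numbered 1..l in this order.\<close>
definition leaf_index :: "tree \<Rightarrow> nat list \<Rightarrow> nat" where
  "leaf_index T L = card {L'. is_leaf T L' \<and> (L', L) \<in> lexord {(a, b). a < b}} + 1"

definition xcoord :: "tree \<Rightarrow> nat list \<Rightarrow> nat" where
  "xcoord T u = Min {leaf_index T L | L. is_leaf T L \<and> prefix u L}"

definition xright :: "tree \<Rightarrow> nat list \<Rightarrow> nat" where
  "xright T u = Max {leaf_index T L | L. is_leaf T L \<and> prefix u L}"

definition ycoord :: "nat list \<Rightarrow> nat" where
  "ycoord u = length u"

definition dpath :: "nat list \<Rightarrow> nat list \<Rightarrow> nat list set" where
  "dpath a b = {p. prefix a p \<and> prefix p b}"

definition RDV_rep :: "'v set \<Rightarrow> ('v \<Rightarrow> 'v \<Rightarrow> bool) \<Rightarrow> tree \<Rightarrow> ('v \<Rightarrow> nat list) \<Rightarrow> ('v \<Rightarrow> nat list) \<Rightarrow> bool" where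
  "RDV_rep V E T tp bt \<longleftrightarrow>
     (\<forall>v\<in>V. is_node T (bt v) \<and> prefix (tp v) (bt v)) \<and>
     (\<forall>v\<in>V. \<forall>w\<in>V. v \<noteq> w \<longrightarrow> (E v w \<longleftrightarrow> dpath (tp v) (bt v) \<inter> dpath (tp w) (bt w) \<noteq> {}))"

definition hseg :: "tree \<Rightarrow> nat list \<Rightarrow> (real \<times> real) set" where
  "hseg T t = closed_segment (real (xcoord T t), real (ycoord t)) (real (xright T t), real (ycoord t))"

definition vseg :: "tree \<Rightarrow> nat list \<Rightarrow> nat list \<Rightarrow> (real \<times> real) set" where
  "vseg T t b = closed_segment (real (xcoord T b), real (ycoord b)) (real (xcoord T b), real (ycoord t))"

definition bottom_up :: "'v set \<Rightarrow> ('v \<Rightarrow> nat list) \<Rightarrow> 'v list \<Rightarrow> bool" where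
  "bottom_up V tp vs \<longleftrightarrow> distinct vs \<and> set vs = V \<and>
     (\<forall>i j. i < j \<and> j < length vs \<longrightarrow> ycoord (tp (vs ! j)) \<le> ycoord (tp (vs ! i)))"

end

theory Submission
  imports Defs
begin

text \<open>Two facts make the picture work. First, the leaves below a node u form an
  interval of the left-to-right leaf order, so a node w at depth at least that of u
  lies below u exactly when x(w) falls between x(u) and x(r(u)). Second, in a
  bottom-up enumeration t(v_j) is not deeper than t(v_i) for i < j, so the two
  downward paths meet exactly when t(v_i) is an ancestor of b(v_j): then t(v_i) is
  itself on P(v_j). Both conditions together say that the vertical segment q(v_j)
  passes through the height of s(v_i) within its horizontal extent.\<close>

abbreviation lex_less :: "(nat list \<times> nat list) set" where
  "lex_less \<equiv> lexord {(a, b). a < b}"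

lemma finite_nodes: "finite {p. is_node T p}"
proof (induction T)
  case (Node ts)
  have "{p. is_node (Node ts) p} \<subseteq> {[]} \<union> (\<Union>i<length ts. Cons i ` {p. is_node (ts ! i) p})"
  proof
    fix p assume "p \<in> {p. is_node (Node ts) p}"
    then have "is_node (Node ts) p" by simp
    then show "p \<in> {[]} \<union> (\<Union>i<length ts. Cons i ` {p. is_node (ts ! i) p})"
      by cases auto
  qed
  moreover have "finite ({[]} \<union> (\<Union>i<length ts. Cons i ` {p. is_node (ts ! i) p}))"
    using Node by auto
  ultimately show ?case by (rule finite_subset)
qed

lemma is_node_prefix: "is_node T q \<Longrightarrow> prefix p q \<Longrightarrow> is_node T p"
proof (induction T q arbitrary: p rule: is_node.induct)
  case (root ts)
  then show ?case by (simp add: is_node.root)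
next
  case (child i ts q)
  then show ?case
    by (cases p) (auto intro: is_node.root is_node.child)
qed

lemma ex_leaf_below:
  assumes "is_node T p"
  shows "\<exists>L. is_leaf T L \<and> prefix p L"
proof -
  let ?below = "\<lambda>q. is_node T q \<and> prefix p q"
  have bounded: "\<forall>q. ?below q \<longrightarrow> length q < Suc (Max (length ` {p. is_node T p}))"
    using finite_nodes[of T] by (auto intro!: le_imp_less_Suc Max_ge)
  obtain q where q: "?below q" and deepest: "\<forall>q'. ?below q' \<longrightarrow> length q' \<le> length q"
    using ex_has_greatest_nat[of ?below p length, OF _ bounded] assms by auto
  have "\<not> is_node T (q @ [0])"
  proof
    assume "is_node T (q @ [0])"
    with q have "?below (q @ [0])" by (auto intro: prefix_order.trans)
    with deepest show False by force
  qed
  with q show ?thesis unfolding is_leaf_def by auto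
qed

lemma leaf_index_strict_mono:
  assumes "is_leaf T L1" "is_leaf T L2" "(L1, L2) \<in> lex_less"
  shows "leaf_index T L1 < leaf_index T L2"
proof -
  let ?before = "\<lambda>L. {L'. is_leaf T L' \<and> (L', L) \<in> lex_less}"
  have trans_less: "trans {(a::nat, b). a < b}" by (auto simp: trans_def)
  have "?before L1 \<subseteq> ?before L2"
    using assms trans_less by (auto intro: lexord_trans)
  moreover have "L1 \<in> ?before L2 - ?before L1"
    using assms by (auto simp: lexord_irreflexive)
  ultimately have "?before L1 \<subset> ?before L2" by blast
  moreover have "finite (?before L2)"
    by (rule finite_subset[OF _ finite_nodes[of T]]) (auto simp: is_leaf_def)
  ultimately show ?thesis
    unfolding leaf_index_def by (simp add: psubset_card_mono)
qed

lemma leaf_index_le_imp_lex_le: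
  assumes "is_leaf T L1" "is_leaf T L2" "leaf_index T L1 \<le> leaf_index T L2"
  shows "L1 = L2 \<or> (L1, L2) \<in> lex_less"
proof -
  have "(L1, L2) \<in> lex_less \<or> L1 = L2 \<or> (L2, L1) \<in> lex_less"
    by (rule lexord_linear) auto
  then show ?thesis
    using leaf_index_strict_mono[OF assms(2,1)] assms(3) by auto
qed

lemma prefix_lex_between:
  assumes "prefix u a" "prefix u b" "a = m \<or> (a, m) \<in> lex_less" "m = b \<or> (m, b) \<in> lex_less"
  shows "prefix u m"
  using assms
proof (induction u arbitrary: a b m)
  case Nil
  then show ?case by simp
next
  case (Cons x u)
  then obtain a' b' where ab: "a = x # a'" "b = x # b'"
    by (auto simp: prefix_def)
  show ?case
  proof (cases m)
    case Nil
    with Cons.prems ab show ?thesis by auto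
  next
    case (Cons y m')
    with Cons.prems ab have "y = x" by auto
    with Cons.prems ab \<open>m = y # m'\<close>
    have "a' = m' \<or> (a', m') \<in> lex_less" "m' = b' \<or> (m', b') \<in> lex_less"
      by auto
    with Cons.IH[of a' b' m'] Cons.prems ab \<open>m = y # m'\<close> \<open>y = x\<close> show ?thesis
      by auto
  qed
qed

definition leaf_indices_below :: "tree \<Rightarrow> nat list \<Rightarrow> nat set" where
  "leaf_indices_below T u = leaf_index T ` {L. is_leaf T L \<and> prefix u L}"

lemma xcoord_eq_Min: "xcoord T u = Min (leaf_indices_below T u)"
  unfolding xcoord_def leaf_indices_below_def by (simp add: setcompr_eq_image)

lemma xright_eq_Max: "xright T u = Max (leaf_indices_below T u)"
  unfolding xright_def leaf_indices_below_def by (simp add: setcompr_eq_image)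

lemma finite_leaf_indices_below: "finite (leaf_indices_below T u)"
  unfolding leaf_indices_below_def
  by (rule finite_imageI, rule finite_subset[OF _ finite_nodes[of T]]) (auto simp: is_leaf_def)

lemma leaf_indices_below_nonempty: "is_node T u \<Longrightarrow> leaf_indices_below T u \<noteq> {}"
  unfolding leaf_indices_below_def using ex_leaf_below by blast

lemma leaf_indices_below_mono: "prefix u w \<Longrightarrow> leaf_indices_below T w \<subseteq> leaf_indices_below T u"
  unfolding leaf_indices_below_def by (auto intro: prefix_order.trans)

lemma xcoord_leaf:
  assumes "is_node T u"
  obtains L where "is_leaf T L" "prefix u L" "xcoord T u = leaf_index T L"
  using Min_in[OF finite_leaf_indices_below leaf_indices_below_nonempty[OF assms]]
  unfolding xcoord_eq_Min leaf_indices_below_def by auto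

lemma xright_leaf:
  assumes "is_node T u"
  obtains L where "is_leaf T L" "prefix u L" "xright T u = leaf_index T L"
  using Max_in[OF finite_leaf_indices_below leaf_indices_below_nonempty[OF assms]]
  unfolding xright_eq_Max leaf_indices_below_def by auto

lemma xcoord_le_xright: "is_node T u \<Longrightarrow> xcoord T u \<le> xright T u"
  unfolding xcoord_eq_Min xright_eq_Max
  by (simp add: finite_leaf_indices_below leaf_indices_below_nonempty)

lemma prefix_iff_xcoord_between:
  assumes "is_node T u" "is_node T w" "length u \<le> length w"
  shows "prefix u w \<longleftrightarrow> xcoord T u \<le> xcoord T w \<and> xcoord T w \<le> xright T u"
proof
  assume "prefix u w"
  then have sub: "leaf_indices_below T w \<subseteq> leaf_indices_below T u"
    by (rule leaf_indices_below_mono)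
  have ne: "leaf_indices_below T w \<noteq> {}"
    using assms(2) by (rule leaf_indices_below_nonempty)
  show "xcoord T u \<le> xcoord T w \<and> xcoord T w \<le> xright T u"
    unfolding xcoord_eq_Min xright_eq_Max
    using Min_antimono[OF sub ne] Max_mono[OF sub ne]
      Min_le[OF finite_leaf_indices_below Max_in[OF finite_leaf_indices_below ne]]
    by (auto simp: finite_leaf_indices_below)
next
  assume between: "xcoord T u \<le> xcoord T w \<and> xcoord T w \<le> xright T u"
  obtain a where a: "is_leaf T a" "prefix u a" "xcoord T u = leaf_index T a"
    using xcoord_leaf[OF assms(1)] .
  obtain b where b: "is_leaf T b" "prefix u b" "xright T u = leaf_index T b"
    using xright_leaf[OF assms(1)] .
  obtain m where m: "is_leaf T m" "prefix w m" "xcoord T w = leaf_index T m"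
    using xcoord_leaf[OF assms(2)] .
  have "a = m \<or> (a, m) \<in> lex_less"
    using leaf_index_le_imp_lex_le[OF a(1) m(1)] a m between by simp
  moreover have "m = b \<or> (m, b) \<in> lex_less"
    using leaf_index_le_imp_lex_le[OF m(1) b(1)] b m between by simp
  ultimately have "prefix u m"
    using prefix_lex_between a(2) b(2) by blast
  with m(2) assms(3) show "prefix u w"
    using prefix_length_prefix by blast
qed

lemma dpath_inter_iff_prefix:
  assumes "prefix a b" "prefix c d" "length c \<le> length a"
  shows "dpath a b \<inter> dpath c d \<noteq> {} \<longleftrightarrow> prefix a d"
proof
  assume "dpath a b \<inter> dpath c d \<noteq> {}"
  then obtain p where "prefix a p" "prefix p d"
    unfolding dpath_def by auto
  then show "prefix a d" by (rule prefix_order.trans)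
next
  assume "prefix a d"
  with assms have "a \<in> dpath a b \<inter> dpath c d"
    unfolding dpath_def using prefix_length_prefix by auto
  then show "dpath a b \<inter> dpath c d \<noteq> {}" by blast
qed

lemma closed_segment_horizontal: "closed_segment (x1::real, y) (x2, y) = closed_segment x1 x2 \<times> {y}"
  by (auto simp: closed_segment_def; (rule_tac x=u in exI)?; auto simp: algebra_simps)

lemma closed_segment_vertical: "closed_segment (x::real, y1) (x, y2) = {x} \<times> closed_segment y1 y2"
  by (auto simp: closed_segment_def; (rule_tac x=u in exI)?; auto simp: algebra_simps)

lemma vseg_inter_hseg_iff:
  assumes "is_node T t'" "length t \<le> length t'" "length t \<le> length b"
  shows "vseg T t b \<inter> hseg T t' \<noteq> {} \<longleftrightarrow>
    length t' \<le> length b \<and> xcoord T t' \<le> xcoord T b \<and> xcoord T b \<le> xright T t'"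
proof -
  have cross: "{x} \<times> I \<inter> J \<times> {y} \<noteq> {} \<longleftrightarrow> x \<in> J \<and> y \<in> I" for x y :: real and I J
    by auto
  show ?thesis
    using assms xcoord_le_xright[OF assms(1)]
    unfolding vseg_def hseg_def closed_segment_horizontal closed_segment_vertical cross
      closed_segment_eq_real_ivl ycoord_def
    by auto
qed

theorem theorem2:
  fixes V :: "'v set" and E :: "'v \<Rightarrow> 'v \<Rightarrow> bool" and T :: tree
    and tp bt :: "'v \<Rightarrow> nat list" and vs :: "'v list"
  assumes "finite V"
    and "\<forall>v w. E v w \<longleftrightarrow> E w v"
    and "\<forall>v. \<not> E v v"
    and "RDV_rep V E T tp bt"
    and "bottom_up V tp vs"
  shows "\<forall>i j. i < j \<and> j < length vs \<longrightarrow>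
           (E (vs ! i) (vs ! j) \<longleftrightarrow> vseg T (tp (vs ! j)) (bt (vs ! j)) \<inter> hseg T (tp (vs ! i)) \<noteq> {})"
proof (intro allI impI)
  fix i j assume ij: "i < j \<and> j < length vs"
  define v w where "v = vs ! i" and "w = vs ! j"
  have "v \<in> V" "w \<in> V" "v \<noteq> w" and depth: "length (tp w) \<le> length (tp v)"
    using assms(5) ij unfolding bottom_up_def ycoord_def v_def w_def
    by (auto simp: nth_eq_iff_index_eq)
  then have edge: "E v w \<longleftrightarrow> dpath (tp v) (bt v) \<inter> dpath (tp w) (bt w) \<noteq> {}"
    and v: "is_node T (bt v)" "prefix (tp v) (bt v)"
    and w: "is_node T (bt w)" "prefix (tp w) (bt w)"
    using assms(4) unfolding RDV_rep_def by auto
  have tv: "is_node T (tp v)"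
    using v by (rule is_node_prefix)
  have "E v w \<longleftrightarrow> prefix (tp v) (bt w)"
    using edge dpath_inter_iff_prefix[OF v(2) w(2) depth] by simp
  also have "\<dots> \<longleftrightarrow> vseg T (tp w) (bt w) \<inter> hseg T (tp v) \<noteq> {}"
    using prefix_iff_xcoord_between[OF tv w(1)] prefix_length_le[OF w(2)] prefix_length_le
      vseg_inter_hseg_iff[OF tv depth prefix_length_le[OF w(2)]]
    by blast
  finally show "E (vs ! i) (vs ! j) \<longleftrightarrow> vseg T (tp (vs ! j)) (bt (vs ! j)) \<inter> hseg T (tp (vs ! i)) \<noteq> {}"
    unfolding v_def w_def .
qed

end
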